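(* Let $C$ be a program of the outcome-based separation logic instance and $p,q$ separation-logic assertions. Then $\vDash[p]\,C\,[\mathsf{er}:q]$ is a manifest error, i.e. for every $\sigma\in\Sigma$ there is $\tau\in[\![C]\!](\sigma)$ with $\tau\vDash(\mathsf{er}:q\ast\mathsf{true})$, if and only if $\vDash\langle\mathsf{ok}:\mathsf{true}\rangle\,C\,\langle(\mathsf{er}:q\ast\mathsf{true})\oplus\top\rangle$.
   Context: Program states are $\Sigma=\mathcal{S}\times\mathcal{H}$: stacks $s\colon\mathsf{Var}\to\mathsf{Val}$ and heaps $h$, partial functions from positive naturals to $\mathsf{Val}\cup\{\bot\}$. Execution model: sets of tagged states $2^{\Sigma+\Sigma}$, with left injection $i_L$ marking erroneous states and right injection $i_R$ marking successful ones; $\mathsf{unit}(x)=\{i_R(x)\}$, $\mathsf{bind}(S,k)=\{i_L(x): i_L(x)\in S\}\cup\bigcup_{i_R(x)\in S}k(x)$, monoid $(\cup,\emptyset)$. A program $C$ (built from $\mathbb{0},\mathbb{1},;,+,{}^\star$ and heap-manipulating atomic commands) has semantics $[\![C]\!]\colon\Sigma\to2^{\Sigma+\Sigma}$ and $[\![C]\!]^\dagger(S)=\mathsf{bind}(S,[\![C]\!])$. Separation-logic assertions $p$ are satisfied by $(s,h)\in\Sigma$; $(s,h)\vDash q\ast\mathsf{true}$ iff $h=h_1\uplus h_2$ (disjoint domains) with $(s,h_1)\vDash q$. For a tagged state: $i_R(\sigma)\vDash(\mathsf{ok}:p)$ iff $\sigma\vDash p$, never $i_L(\sigma)\vDash(\mathsf{ok}:p)$;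 $i_L(\sigma)\vDash(\mathsf{er}:q)$ iff $\sigma\vDash q$, never $i_R(\sigma)\vDash(\mathsf{er}:q)$. A set $S$ satisfies such an atomic assertion iff $S\neq\emptyset$ and all its elements do; $S\vDash\top$ always; $S\vDash\varphi\oplus\psi$ iff $S=S_1\cup S_2$ with $S_1\vDash\varphi$, $S_2\vDash\psi$. $\vDash\langle\varphi\rangle C\langle\psi\rangle$ iff every $S$ with $S\vDash\varphi$ has $[\![C]\!]^\dagger(S)\vDash\psi$. *)

theory Defs
  imports Main
begin

type_synonym var = string
type_synonym val = int
type_synonym stack = "var \<Rightarrow> val"
text \<open>Heaps: partial maps from addresses to values or the deallocated marker
  (None inside Some plays the role of \<bottom>).  Addresses are positive naturals,
  enforced by the well-formedness predicate below.\<close>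
type_synonym heap = "nat \<rightharpoonup> val option"
type_synonym state = "stack \<times> heap"

definition States :: "state set" where
  "States = {(s, h). 0 \<notin> dom h}"

text \<open>Tagged states: Inl = erroneous (i_L), Inr = successful (i_R).\<close>
type_synonym tstate = "state + state"

definition TStates :: "tstate set" where
  "TStates = Inl ` States \<union> Inr ` States"

definition unit :: "state \<Rightarrow> tstate set" where
  "unit x = {Inr x}"

definition bind :: "tstate set \<Rightarrow> (state \<Rightarrow> tstate set) \<Rightarrow> tstate set" where
  "bind S k = {Inl x | x. Inl x \<in> S} \<union> (\<Union>x \<in> {x. Inr x \<in> S}. k x)"

type_synonym exp = "stack \<Rightarrow> val"
type_synonym bexp = "stack \<Rightarrow> bool"

datatype atom =
    Assign var exp
  | Assume bexp
  | Alloc var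
  | Free exp
  | Load var exp
  | Store exp exp
  | Error

datatype cmd =
    Zero
  | One
  | Seq cmd cmd
  | Plus cmd cmd
  | Star cmd
  | Atom atom

definition addr :: "val \<Rightarrow> nat option" where
  "addr v = (if v > 0 then Some (nat v) else None)"

fun atom_sem :: "atom \<Rightarrow> state \<Rightarrow> tstate set" where
  "atom_sem (Assign x e) (s, h) = {Inr (s(x := e s), h)}"
| "atom_sem (Assume b) (s, h) = (if b s then {Inr (s, h)} else {})"
| "atom_sem (Alloc x) (s, h) =
     {Inr (s(x := int a), h(a \<mapsto> Some v)) | a v. a > 0 \<and> (h a = None \<or> h a = Some None)}"
| "atom_sem (Free e) (s, h) =
     (case addr (e s) of
        Some a \<Rightarrow> (case h a of Some (Some v) \<Rightarrow> {Inr (s, h(a \<mapsto> None))}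
                            | _ \<Rightarrow> {Inl (s, h)})
      | None \<Rightarrow> {Inl (s, h)})"
| "atom_sem (Load x e) (s, h) =
     (case addr (e s) of
        Some a \<Rightarrow> (case h a of Some (Some v) \<Rightarrow> {Inr (s(x := v), h)}
                            | _ \<Rightarrow> {Inl (s, h)})
      | None \<Rightarrow> {Inl (s, h)})"
| "atom_sem (Store e1 e2) (s, h) =
     (case addr (e1 s) of
        Some a \<Rightarrow> (case h a of Some (Some v) \<Rightarrow> {Inr (s, h(a \<mapsto> Some (e2 s)))}
                            | _ \<Rightarrow> {Inl (s, h)})
      | None \<Rightarrow> {Inl (s, h)})"
| "atom_sem Error \<sigma> = {Inl \<sigma>}"

fun iter_sem :: "nat \<Rightarrow> (state \<Rightarrow> tstate set) \<Rightarrow> state \<Rightarrow> tstate set" where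
  "iter_sem 0 f = unit"
| "iter_sem (Suc n) f = (\<lambda>\<sigma>. bind (f \<sigma>) (iter_sem n f))"

fun sem :: "cmd \<Rightarrow> state \<Rightarrow> tstate set" where
  "sem Zero \<sigma> = {}"
| "sem One \<sigma> = unit \<sigma>"
| "sem (Seq C1 C2) \<sigma> = bind (sem C1 \<sigma>) (sem C2)"
| "sem (Plus C1 C2) \<sigma> = sem C1 \<sigma> \<union> sem C2 \<sigma>"
| "sem (Star C) \<sigma> = (\<Union>n. iter_sem n (sem C) \<sigma>)"
| "sem (Atom a) \<sigma> = atom_sem a \<sigma>"

definition sem_dagger :: "cmd \<Rightarrow> tstate set \<Rightarrow> tstate set" where
  "sem_dagger C S = bind S (sem C)"

type_synonym assn = "state \<Rightarrow> bool"

definition sl_true :: assn where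
  "sl_true = (\<lambda>_. True)"

definition sep_true :: "assn \<Rightarrow> assn" where
  "sep_true q = (\<lambda>(s, h). \<exists>h1 h2. dom h1 \<inter> dom h2 = {} \<and> h = h1 ++ h2 \<and> q (s, h1))"

datatype oassn =
    OK assn
  | ER assn
  | TopA
  | OPlus oassn oassn

definition tsat :: "tstate \<Rightarrow> oassn \<Rightarrow> bool" where
  "tsat t \<phi> = (case \<phi> of
      OK p \<Rightarrow> (case t of Inr \<sigma> \<Rightarrow> p \<sigma> | Inl _ \<Rightarrow> False)
    | ER q \<Rightarrow> (case t of Inl \<sigma> \<Rightarrow> q \<sigma> | Inr _ \<Rightarrow> False)
    | _ \<Rightarrow> False)"

fun ssat :: "tstate set \<Rightarrow> oassn \<Rightarrow> bool" where
  "ssat S (OK p) = (S \<noteq> {} \<and> (\<forall>t\<in>S. tsat t (OK p)))"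
| "ssat S (ER q) = (S \<noteq> {} \<and> (\<forall>t\<in>S. tsat t (ER q)))"
| "ssat S TopA = True"
| "ssat S (OPlus \<phi> \<psi>) = (\<exists>S1 S2. S = S1 \<union> S2 \<and> ssat S1 \<phi> \<and> ssat S2 \<psi>)"

definition ovalid :: "oassn \<Rightarrow> cmd \<Rightarrow> oassn \<Rightarrow> bool" where
  "ovalid \<phi> C \<psi> = (\<forall>S. S \<subseteq> TStates \<longrightarrow> ssat S \<phi> \<longrightarrow> ssat (sem_dagger C S) \<psi>)"

definition manifest_error :: "assn \<Rightarrow> cmd \<Rightarrow> assn \<Rightarrow> bool" where
  "manifest_error p C q = (\<forall>\<sigma>\<in>States. \<exists>\<tau>\<in>sem C \<sigma>. tsat \<tau> (ER (sep_true q)))"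

end

theory Submission
  imports Defs
begin

text \<open>The outcome assertion (er:r) \<oplus> \<top> holds of an outcome set exactly when one of its
  outcomes satisfies er:r, and ok:true is already satisfied by a singleton {i_R \<sigma>}.  So validity
  of the triple specialises to every single initial state, and conversely one successful state
  \<sigma> in S puts all outcomes of \<sigma> into the outcomes of S.\<close>

lemma ssat_OPlus_TopA_iff: "ssat S (OPlus \<phi> TopA) \<longleftrightarrow> (\<exists>S1 \<subseteq> S. ssat S1 \<phi>)"
  by auto

lemma ssat_OPlus_ER_TopA_iff: "ssat S (OPlus (ER r) TopA) \<longleftrightarrow> (\<exists>t\<in>S. tsat t (ER r))"
proof -
  have "ssat {t} (ER r) \<longleftrightarrow> tsat t (ER r)" for t
    by simp
  then show ?thesis
    unfolding ssat_OPlus_TopA_iff by (auto simp del: ssat.simps) auto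
qed

lemma ssat_OK_true_iff: "ssat S (OK sl_true) \<longleftrightarrow> S \<noteq> {} \<and> S \<subseteq> range Inr"
proof -
  have "tsat t (OK sl_true) \<longleftrightarrow> t \<in> range Inr" for t
    by (cases t) (auto simp: tsat_def sl_true_def)
  then show ?thesis
    by auto
qed

lemma sem_dagger_Inr_singleton: "sem_dagger C {Inr \<sigma>} = sem C \<sigma>"
  by (auto simp: sem_dagger_def bind_def)

lemma sem_subset_sem_dagger: "Inr \<sigma> \<in> S \<Longrightarrow> sem C \<sigma> \<subseteq> sem_dagger C S"
  by (auto simp: sem_dagger_def bind_def)

lemma ovalid_OK_true_ER_TopA_iff:
  "ovalid (OK sl_true) C (OPlus (ER r) TopA) \<longleftrightarrow>
     (\<forall>\<sigma>\<in>States. \<exists>\<tau>\<in>sem C \<sigma>. tsat \<tau> (ER r))"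
proof
  assume valid: "ovalid (OK sl_true) C (OPlus (ER r) TopA)"
  show "\<forall>\<sigma>\<in>States. \<exists>\<tau>\<in>sem C \<sigma>. tsat \<tau> (ER r)"
  proof
    fix \<sigma> assume "\<sigma> \<in> States"
    then have "{Inr \<sigma>} \<subseteq> TStates" and "ssat {Inr \<sigma>} (OK sl_true)"
      by (auto simp: TStates_def ssat_OK_true_iff simp del: ssat.simps)
    with valid have "ssat (sem C \<sigma>) (OPlus (ER r) TopA)"
      unfolding ovalid_def by (metis sem_dagger_Inr_singleton)
    then show "\<exists>\<tau>\<in>sem C \<sigma>. tsat \<tau> (ER r)"
      by (simp add: ssat_OPlus_ER_TopA_iff del: ssat.simps)
  qed
next
  assume error: "\<forall>\<sigma>\<in>States. \<exists>\<tau>\<in>sem C \<sigma>. tsat \<tau> (ER r)"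
  show "ovalid (OK sl_true) C (OPlus (ER r) TopA)"
    unfolding ovalid_def
  proof (intro allI impI)
    fix S assume "S \<subseteq> TStates" and "ssat S (OK sl_true)"
    have "S \<noteq> {} \<and> S \<subseteq> range Inr"
      using \<open>ssat S (OK sl_true)\<close> unfolding ssat_OK_true_iff .
    then obtain t where "t \<in> S" and "t \<in> range Inr"
      by auto
    then obtain \<sigma> where "Inr \<sigma> \<in> S"
      by auto
    with \<open>S \<subseteq> TStates\<close> have "\<sigma> \<in> States"
      by (auto simp: TStates_def)
    with error obtain \<tau> where "\<tau> \<in> sem C \<sigma>" and "tsat \<tau> (ER r)"
      by auto
    moreover have "\<tau> \<in> sem_dagger C S"
      using sem_subset_sem_dagger[OF \<open>Inr \<sigma> \<in> S\<close>] \<open>\<tau> \<in> sem C \<sigma>\<close> by (rule subsetD)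
    ultimately show "ssat (sem_dagger C S) (OPlus (ER r) TopA)"
      by (auto simp: ssat_OPlus_ER_TopA_iff simp del: ssat.simps)
  qed
qed

theorem lemma6p7:
  fixes C :: cmd and p q :: assn
  shows "manifest_error p C q \<longleftrightarrow> ovalid (OK sl_true) C (OPlus (ER (sep_true q)) TopA)"
  by (simp add: manifest_error_def ovalid_OK_true_ER_TopA_iff)

end
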